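(* Let $(X,\omega)$ be a Hermitian manifold and $t,s\in\mathbb{R}$. If ${}^t\mathrm{HSC}_\omega(v)={}^s\mathrm{HSC}_\omega(v)$ for all nonzero $v\in T^{1,0}X$, then $t=s$, or $t=2-s$, or $\omega$ is Kähler.
   Context: Let $(X,\omega)$ be a Hermitian manifold with metric $g$; ${}^c\nabla$ is the Chern connection on $T^{1,0}X$, ${}^l\nabla$ the Lichnerowicz connection (the $T^{1,0}$-component of the complexified Levi-Civita connection), and ${}^t\nabla=t\,{}^c\nabla+(1-t)\,{}^l\nabla$ the $t$-Gauduchon connection, with curvature ${}^tR(x,y)=[{}^t\nabla_x,{}^t\nabla_y]-{}^t\nabla_{[x,y]}$. The $t$-Gauduchon holomorphic sectional curvature is ${}^t\mathrm{HSC}_\omega(v)=g({}^tR(v,\bar v)v,\bar v)/|v|^4$ for $0\ne v\in T^{1,0}X$. *)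

theory Defs
  imports "HOL-Analysis.Analysis"
begin

text \<open>Everything is done in a holomorphic chart: an open set U of C^n with holomorphic
coordinates z_1..z_n. A Hermitian metric is given by its coefficient matrix
h z $ i $ j = g(d/dz_i, d/d(conj z_j)) = g_{i jbar}.
Indices of the complexified tangent space: Inl i = d/dz_i, Inr i = d/d(conj z_i).\<close>

inductive_set iter_derivs :: "('a::real_normed_vector \<Rightarrow> 'b::real_normed_vector) \<Rightarrow> ('a \<Rightarrow> 'b) set"
  for f where
  base: "f \<in> iter_derivs f"
| step: "g \<in> iter_derivs f \<Longrightarrow> (\<lambda>x. frechet_derivative g (at x) v) \<in> iter_derivs f"

definition smooth_on :: "'a::real_normed_vector set \<Rightarrow> ('a \<Rightarrow> 'b::real_normed_vector) \<Rightarrow> bool" where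
  "smooth_on U f \<longleftrightarrow> (\<forall>g \<in> iter_derivs f. \<forall>x\<in>U. g differentiable (at x))"

definition hermitian_metric_on :: "(complex^'n) set \<Rightarrow> (complex^'n \<Rightarrow> complex^'n^'n) \<Rightarrow> bool" where
  "hermitian_metric_on U h \<longleftrightarrow>
     (\<forall>i j. smooth_on U (\<lambda>z. h z $ i $ j)) \<and>
     (\<forall>z\<in>U. \<forall>i j. h z $ j $ i = cnj (h z $ i $ j)) \<and>
     (\<forall>z\<in>U. \<forall>v::complex^'n. v \<noteq> 0 \<longrightarrow> Re (\<Sum>i\<in>UNIV. \<Sum>j\<in>UNIV. v $ i * h z $ i $ j * cnj (v $ j)) > 0)"

definition wirt :: "('n::finite + 'n) \<Rightarrow> (complex^'n \<Rightarrow> complex) \<Rightarrow> complex^'n \<Rightarrow> complex" where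
  "wirt A f z = (case A of
      Inl i \<Rightarrow> (frechet_derivative f (at z) (axis i 1) - \<i> * frechet_derivative f (at z) (axis i \<i>)) / 2
    | Inr i \<Rightarrow> (frechet_derivative f (at z) (axis i 1) + \<i> * frechet_derivative f (at z) (axis i \<i>)) / 2)"

text \<open>The complexified (C-bilinear) metric in the frame (d/dz, d/d(conj z)).\<close>
definition bigG :: "(complex^'n \<Rightarrow> complex^'n^'n) \<Rightarrow> complex^'n \<Rightarrow> complex^('n::finite + 'n)^('n + 'n)" where
  "bigG h z = (\<chi> A B. case (A, B) of
       (Inl i, Inr j) \<Rightarrow> h z $ i $ j
     | (Inr j, Inl i) \<Rightarrow> h z $ i $ j
     | _ \<Rightarrow> 0)"

text \<open>Christoffel symbols of the (complexified) Levi-Civita connection: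
  LC_{d_A} d_B = sum_C Gamma^C_{AB} d_C.\<close>
definition LC_christ :: "(complex^'n \<Rightarrow> complex^'n^'n) \<Rightarrow> ('n::finite + 'n) \<Rightarrow> ('n + 'n) \<Rightarrow> ('n + 'n) \<Rightarrow> complex^'n \<Rightarrow> complex" where
  "LC_christ h C A B z = (1/2) * (\<Sum>D\<in>UNIV. matrix_inv (bigG h z) $ C $ D *
      (wirt A (\<lambda>w. bigG h w $ B $ D) z + wirt B (\<lambda>w. bigG h w $ A $ D) z - wirt D (\<lambda>w. bigG h w $ A $ B) z))"

text \<open>Lichnerowicz connection on T^{1,0}: the (1,0)-part of LC.
  lnabla_{d_A} d_j = sum_k (lich_christ h k A j) d_k.\<close>
definition lich_christ :: "(complex^'n \<Rightarrow> complex^'n^'n) \<Rightarrow> 'n::finite \<Rightarrow> ('n + 'n) \<Rightarrow> 'n \<Rightarrow> complex^'n \<Rightarrow> complex" where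
  "lich_christ h k A j z = LC_christ h (Inl k) A (Inl j) z"

text \<open>Chern connection on T^{1,0}: its (0,1)-part is dbar (so cnabla_{d/d(conj z_i)} d_j = 0) and
  it is metric compatible: sum_l Gamma^l_{ij} g_{l kbar} = d_i g_{j kbar}.\<close>
definition chern_christ :: "(complex^'n \<Rightarrow> complex^'n^'n) \<Rightarrow> 'n::finite \<Rightarrow> ('n + 'n) \<Rightarrow> 'n \<Rightarrow> complex^'n \<Rightarrow> complex" where
  "chern_christ h k A j z = (case A of
      Inl i \<Rightarrow> (\<Sum>l\<in>UNIV. wirt (Inl i) (\<lambda>w. h w $ j $ l) z * matrix_inv (h z) $ l $ k)
    | Inr i \<Rightarrow> 0)"

definition gaud_christ :: "real \<Rightarrow> (complex^'n \<Rightarrow> complex^'n^'n) \<Rightarrow> 'n::finite \<Rightarrow> ('n + 'n) \<Rightarrow> 'n \<Rightarrow> complex^'n \<Rightarrow> complex" where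
  "gaud_christ t h k A j z = complex_of_real t * chern_christ h k A j z
                           + complex_of_real (1 - t) * lich_christ h k A j z"

text \<open>Curvature R(x,y) = [nabla_x, nabla_y] - nabla_[x,y] on coordinate fields (which commute):
  tR(d_A, d_B) d_j = sum_k (gaud_curv t h k A B j z) d_k.\<close>
definition gaud_curv :: "real \<Rightarrow> (complex^'n \<Rightarrow> complex^'n^'n) \<Rightarrow> 'n::finite \<Rightarrow> ('n + 'n) \<Rightarrow> ('n + 'n) \<Rightarrow> 'n \<Rightarrow> complex^'n \<Rightarrow> complex" where
  "gaud_curv t h k A B j z =
     wirt A (gaud_christ t h k B j) z - wirt B (gaud_christ t h k A j) z
     + (\<Sum>m\<in>UNIV. gaud_christ t h m B j z * gaud_christ t h k A m z
            - gaud_christ t h m A j z * gaud_christ t h k B m z)"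

text \<open>t-Gauduchon holomorphic sectional curvature at z in direction v = sum_i v_i d/dz_i:
  g(tR(v, vbar) v, vbar) / |v|^4.\<close>
definition gaud_HSC :: "real \<Rightarrow> (complex^'n \<Rightarrow> complex^'n^'n) \<Rightarrow> complex^'n \<Rightarrow> complex^'n::finite \<Rightarrow> complex" where
  "gaud_HSC t h z v =
     (\<Sum>k\<in>UNIV. \<Sum>m\<in>UNIV. (\<Sum>i\<in>UNIV. \<Sum>j\<in>UNIV. \<Sum>l\<in>UNIV. v $ i * cnj (v $ j) * v $ l * gaud_curv t h k (Inl i) (Inr j) l z)
               * cnj (v $ m) * h z $ k $ m)
     / (\<Sum>i\<in>UNIV. \<Sum>j\<in>UNIV. v $ i * cnj (v $ j) * h z $ i $ j) ^ 2"

text \<open>Kaehler: d omega = 0 where omega = i sum g_{i jbar} dz_i ^ d(conj z_j), i.e.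
  d_k g_{i jbar} = d_i g_{k jbar} (partial omega = 0) and
  dbar_k g_{i jbar} = dbar_j g_{i kbar} (dbar omega = 0).\<close>
definition kahler_on :: "(complex^'n) set \<Rightarrow> (complex^'n \<Rightarrow> complex^'n^'n) \<Rightarrow> bool" where
  "kahler_on U h \<longleftrightarrow> (\<forall>z\<in>U. \<forall>i j k.
      wirt (Inl k) (\<lambda>w. h w $ i $ j) z = wirt (Inl i) (\<lambda>w. h w $ k $ j) z \<and>
      wirt (Inr k) (\<lambda>w. h w $ i $ j) z = wirt (Inr j) (\<lambda>w. h w $ i $ k) z)"

end

theory Submission
  imports Defs
begin

(* Write the t-Gauduchon connection as nabla^c + (1 - t) E, where E = nabla^l - nabla^c is a
   tensor. Its curvature is then R^c + (1 - t) R_1 + (1 - t)^2 R_2 with R_1, R_2 independent of t.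
   On (v, vbar, v, vbar) the linear coefficient vanishes by antisymmetry, and the quadratic one
   equals -|T(v, -, vbar)|^2 / 4, where T is the torsion of the Chern connection and the norm is
   taken with the inverse metric. So if the holomorphic sectional curvatures for t and s agree
   and (1 - t)^2 <> (1 - s)^2, then T(v, -, vbar) = 0 for all v, hence T = 0 by polarisation.
   This is the vanishing of the (2,1)-part of d omega; the (1,2)-part is its conjugate. *)

section \<open>Wirtinger derivatives\<close>

definition wirt_linear :: "('n::finite + 'n) \<Rightarrow> (complex^'n \<Rightarrow> complex) \<Rightarrow> complex" where
  "wirt_linear A D = (case A of
      Inl i \<Rightarrow> (D (axis i 1) - \<i> * D (axis i \<i>)) / 2
    | Inr i \<Rightarrow> (D (axis i 1) + \<i> * D (axis i \<i>)) / 2)"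

lemma wirt_eq_wirt_linear: "wirt A f z = wirt_linear A (frechet_derivative f (at z))"
  by (simp add: wirt_def wirt_linear_def split: sum.split)

lemma wirt_has_derivative: "(f has_derivative D) (at z) \<Longrightarrow> wirt A f z = wirt_linear A D"
  by (metis frechet_derivative_at wirt_eq_wirt_linear)

lemma wirt_add:
  assumes "f differentiable (at z)" "g differentiable (at z)"
  shows "wirt A (\<lambda>w. f w + g w) z = wirt A f z + wirt A g z" (is "_ = ?rhs")
proof -
  have "wirt A (\<lambda>w. f w + g w) z
      = wirt_linear A (\<lambda>x. frechet_derivative f (at z) x + frechet_derivative g (at z) x)"
    using assms unfolding frechet_derivative_works by (intro wirt_has_derivative has_derivative_add)
  also have "\<dots> = ?rhs"
    by (cases A) (simp_all add: wirt_eq_wirt_linear wirt_linear_def field_simps)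
  finally show ?thesis .
qed

lemma wirt_mult:
  assumes "f differentiable (at z)" "g differentiable (at z)"
  shows "wirt A (\<lambda>w. f w * g w) z = f z * wirt A g z + wirt A f z * g z" (is "_ = ?rhs")
proof -
  have "wirt A (\<lambda>w. f w * g w) z
      = wirt_linear A (\<lambda>x. f z * frechet_derivative g (at z) x + frechet_derivative f (at z) x * g z)"
    using assms unfolding frechet_derivative_works by (intro wirt_has_derivative has_derivative_mult)
  also have "\<dots> = ?rhs"
    by (cases A) (simp_all add: wirt_eq_wirt_linear wirt_linear_def field_simps)
  finally show ?thesis .
qed

lemma wirt_const: "wirt A (\<lambda>w. c) z = 0"
  by (simp add: wirt_eq_wirt_linear wirt_linear_def split: sum.split)

lemma wirt_cmult: "f differentiable (at z) \<Longrightarrow> wirt A (\<lambda>w. c * f w) z = c * wirt A f z"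
  using wirt_mult[OF differentiable_const] by (simp add: wirt_const)

lemma wirt_sum:
  assumes "finite S" "\<And>a. a \<in> S \<Longrightarrow> f a differentiable (at z)"
  shows "wirt A (\<lambda>w. \<Sum>a\<in>S. f a w) z = (\<Sum>a\<in>S. wirt A (f a) z)"
  using assms
proof (induction S rule: finite_induct)
  case empty
  then show ?case by (simp add: wirt_const)
next
  case (insert x F)
  then have "wirt A (\<lambda>w. f x w + (\<Sum>a\<in>F. f a w)) z = wirt A (f x) z + wirt A (\<lambda>w. \<Sum>a\<in>F. f a w) z"
    by (intro wirt_add) (auto intro!: differentiable_sum)
  with insert show ?case by simp
qed

lemma wirt_cnj:
  assumes "f differentiable (at z)"
  shows "wirt (Inr j) (\<lambda>w. cnj (f w)) z = cnj (wirt (Inl j) f z)" (is "_ = ?rhs")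
proof -
  have "wirt (Inr j) (\<lambda>w. cnj (f w)) z = wirt_linear (Inr j) (\<lambda>x. cnj (frechet_derivative f (at z) x))"
    using assms unfolding frechet_derivative_works by (intro wirt_has_derivative has_derivative_cnj)
  also have "\<dots> = ?rhs"
    by (simp add: wirt_eq_wirt_linear wirt_linear_def)
  finally show ?thesis .
qed

lemma wirt_cong_open:
  assumes "open X" "z \<in> X" "\<And>w. w \<in> X \<Longrightarrow> f w = g w"
  shows "wirt A f z = wirt A g z"
proof -
  have "(f has_derivative D) (at z) \<longleftrightarrow> (g has_derivative D) (at z)" for D
    using assms has_derivative_transform_within_open by metis
  then show ?thesis
    by (simp add: wirt_eq_wirt_linear frechet_derivative_def)
qed

lemma differentiable_transform_within_open:
  assumes "f differentiable (at z)" "open X" "z \<in> X" "\<And>w. w \<in> X \<Longrightarrow> f w = g w"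
  shows "g differentiable (at z)"
  using assms has_derivative_transform_within_open unfolding differentiable_def by blast

lemma smooth_on_differentiable: "smooth_on U f \<Longrightarrow> z \<in> U \<Longrightarrow> f differentiable (at z)"
  unfolding smooth_on_def by (meson iter_derivs.base)

lemma smooth_on_differentiable_wirt:
  assumes "smooth_on U f" "z \<in> U"
  shows "(\<lambda>w. wirt A f w) differentiable (at z)"
proof -
  have "(\<lambda>x. frechet_derivative f (at x) v) differentiable (at z)" for v
    using assms iter_derivs.step[OF iter_derivs.base] unfolding smooth_on_def by blast
  then show ?thesis
    unfolding wirt_def by (cases A) (auto intro!: derivative_intros)
qed

lemma matrix_inv_unique:
  fixes A :: "'a::comm_ring_1^'n::finite^'n"
  assumes "A ** B = mat 1" "B ** A = mat 1"
  shows "matrix_inv A = B"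
  unfolding matrix_inv_def
proof (rule some_equality)
  fix B' assume "A ** B' = mat 1 \<and> B' ** A = mat 1"
  then have "B' = B' ** (A ** B)" "B' ** A = mat 1" using assms by auto
  then show "B' = B" by (metis matrix_mul_assoc matrix_mul_lid)
qed (use assms in blast)

lemma matrix_inv_det_nz:
  fixes A :: "'a::field^'n::finite^'n"
  assumes "det A \<noteq> 0"
  shows "A ** matrix_inv A = mat 1" "matrix_inv A ** A = mat 1"
proof -
  have "\<exists>B. A ** B = mat 1 \<and> B ** A = mat 1"
    using assms invertible_det_nz unfolding invertible_def by blast
  then have "A ** matrix_inv A = mat 1 \<and> matrix_inv A ** A = mat 1"
    unfolding matrix_inv_def by (rule someI_ex)
  then show "A ** matrix_inv A = mat 1" "matrix_inv A ** A = mat 1" by auto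
qed

lemma matrix_inv_cramer:
  fixes A :: "'a::field^'n::finite^'n"
  assumes "det A \<noteq> 0"
  shows "matrix_inv A $ q $ k = det (\<chi> i j. if j = q then axis k 1 $ i else A $ i $ j) / det A"
proof -
  let ?x = "matrix_inv A *v axis k 1"
  have "A *v ?x = axis k 1"
    by (simp only: matrix_vector_mul_assoc matrix_inv_det_nz(1)[OF assms] matrix_vector_mul_lid)
  then have "?x $ q = det (\<chi> i j. if j = q then axis k 1 $ i else A $ i $ j) / det A"
    using cramer[OF assms] by simp
  moreover have "?x $ q = matrix_inv A $ q $ k"
    by (simp add: matrix_vector_mult_def axis_def if_distrib cong: if_cong)
  ultimately show ?thesis by simp
qed

lemma differentiable_det:
  fixes M :: "'a::real_normed_vector \<Rightarrow> 'b::real_normed_field^'n::finite^'n"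
  assumes "\<And>i j. (\<lambda>w. M w $ i $ j) differentiable (at z)"
  shows "(\<lambda>w. det (M w)) differentiable (at z)"
proof -
  have "(\<lambda>w. \<Prod>i\<in>UNIV. M w $ i $ p i) differentiable (at z)" for p
    by (rule differentiableI, rule has_derivative_prod, rule assms[unfolded frechet_derivative_works])
  then show ?thesis
    unfolding det_def by (auto intro!: differentiable_sum differentiable_mult)
qed

lemma sum_UNIV_Plus:
  fixes f :: "('a::finite + 'b::finite) \<Rightarrow> 'c::comm_monoid_add"
  shows "(\<Sum>A\<in>UNIV. f A) = (\<Sum>i\<in>UNIV. f (Inl i)) + (\<Sum>i\<in>UNIV. f (Inr i))"
  by (simp flip: UNIV_Plus_UNIV add: sum.Plus)

lemma sum_mult_delta:
  fixes f :: "'n::finite \<Rightarrow> 'a::semiring_1"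
  shows "(\<Sum>j\<in>UNIV. f j * (if j = k then 1 else 0)) = f k"
  by (simp add: if_distrib cong: if_cong)

lemma sum_swap_in2:
  "(\<Sum>x\<in>X. \<Sum>i\<in>I. \<Sum>j\<in>J. f x i j) = (\<Sum>i\<in>I. \<Sum>j\<in>J. \<Sum>x\<in>X. f x i j)"
  by (subst sum.swap, rule sum.cong[OF refl], rule sum.swap)

lemma sum_swap_in3:
  "(\<Sum>x\<in>X. \<Sum>i\<in>I. \<Sum>j\<in>J. \<Sum>l\<in>L. f x i j l) = (\<Sum>i\<in>I. \<Sum>j\<in>J. \<Sum>l\<in>L. \<Sum>x\<in>X. f x i j l)"
  by (subst sum.swap, rule sum.cong[OF refl], subst sum.swap, rule sum.cong[OF refl], rule sum.swap)

lemma sum_swap_in4: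
  "(\<Sum>x\<in>X. \<Sum>i\<in>I. \<Sum>j\<in>J. \<Sum>l\<in>L. \<Sum>m\<in>M. f x i j l m)
   = (\<Sum>i\<in>I. \<Sum>j\<in>J. \<Sum>l\<in>L. \<Sum>m\<in>M. \<Sum>x\<in>X. f x i j l m)"
  by (subst sum.swap, rule sum.cong[OF refl], rule sum_swap_in3)

lemma sum_mult_sum_swap:
  fixes a :: "'p \<Rightarrow> 'a::comm_semiring_0"
  shows "(\<Sum>k\<in>K. (\<Sum>p\<in>P. a p * b k p) * c k) = (\<Sum>p\<in>P. a p * (\<Sum>k\<in>K. b k p * c k))"
  unfolding sum_distrib_left sum_distrib_right by (subst sum.swap) (simp add: mult.assoc)

lemma sum4_mult_factor:
  fixes A :: "'p \<Rightarrow> 'i \<Rightarrow> 'm \<Rightarrow> 'a::comm_semiring_0"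
  shows "(\<Sum>i\<in>I. \<Sum>j\<in>J. \<Sum>l\<in>L. \<Sum>m\<in>M. \<Sum>p\<in>P. B p j l * A p i m)
       = (\<Sum>p\<in>P. (\<Sum>j\<in>J. \<Sum>l\<in>L. B p j l) * (\<Sum>i\<in>I. \<Sum>m\<in>M. A p i m))"
proof -
  have "(\<Sum>p\<in>P. (\<Sum>j\<in>J. \<Sum>l\<in>L. B p j l) * (\<Sum>i\<in>I. \<Sum>m\<in>M. A p i m))
      = (\<Sum>p\<in>P. \<Sum>i\<in>I. \<Sum>m\<in>M. \<Sum>j\<in>J. \<Sum>l\<in>L. B p j l * A p i m)"
    by (simp add: sum_distrib_left sum_distrib_right)
  also have "\<dots> = (\<Sum>i\<in>I. \<Sum>m\<in>M. \<Sum>j\<in>J. \<Sum>l\<in>L. \<Sum>p\<in>P. B p j l * A p i m)"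
    by (rule sum_swap_in4)
  also have "\<dots> = (\<Sum>i\<in>I. \<Sum>j\<in>J. \<Sum>l\<in>L. \<Sum>m\<in>M. \<Sum>p\<in>P. B p j l * A p i m)"
    by (rule sum.cong[OF refl], rule sum_swap_in2)
  finally show ?thesis ..
qed

lemma sum_antisym_eq_0:
  fixes f :: "'a \<Rightarrow> 'b \<Rightarrow> 'a \<Rightarrow> 'c::real_vector"
  assumes "\<And>i j l. f i j l = - f l j i"
  shows "(\<Sum>i\<in>A. \<Sum>j\<in>B. \<Sum>l\<in>A. f i j l) = 0"
proof -
  let ?S = "\<Sum>i\<in>A. \<Sum>j\<in>B. \<Sum>l\<in>A. f i j l"
  have "?S = (\<Sum>l\<in>A. \<Sum>j\<in>B. \<Sum>i\<in>A. f i j l)"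
    by (subst sum.swap, subst (2) sum.swap, rule sum.cong[OF refl], rule sum.swap)
  also have "\<dots> = (\<Sum>l\<in>A. \<Sum>j\<in>B. \<Sum>i\<in>A. - f l j i)"
    by (intro sum.cong refl assms)
  finally have "?S = - ?S"
    by (simp add: sum_negf)
  then show ?thesis
    by (metis neg_eq_iff_add_eq_0 scaleR_2 scaleR_eq_0_iff zero_neq_numeral)
qed

lemma sesquilinear_axis:
  fixes T :: "'n::finite \<Rightarrow> 'n \<Rightarrow> complex"
  shows "(\<Sum>i\<in>UNIV. \<Sum>m\<in>UNIV. axis a x $ i * cnj (axis b y $ m) * T i m) = x * cnj y * T a b"
proof -
  have "axis a x $ i * cnj (axis b y $ m) * T i m
      = (if m = b then if i = a then x * cnj y * T a b else 0 else 0)" for i m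
    by (simp add: axis_def)
  then show ?thesis by simp
qed

lemma sesquilinear_axis_add:
  fixes T :: "'n::finite \<Rightarrow> 'n \<Rightarrow> complex"
  shows "(\<Sum>i\<in>UNIV. \<Sum>m\<in>UNIV. (axis a x + axis b y) $ i * cnj ((axis a x + axis b y) $ m) * T i m)
     = x * cnj x * T a a + x * cnj y * T a b + y * cnj x * T b a + y * cnj y * T b b"
  by (simp add: distrib_left distrib_right sum.distrib sesquilinear_axis)

lemma sesquilinear_eq_0_imp_eq_0:
  fixes T :: "'n::finite \<Rightarrow> 'n \<Rightarrow> complex"
  assumes "\<And>v::complex^'n. (\<Sum>i\<in>UNIV. \<Sum>m\<in>UNIV. v $ i * cnj (v $ m) * T i m) = 0"
  shows "T a b = 0"
proof -
  have diag: "T c c = 0" for c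
    using assms[of "axis c 1"] by (simp add: sesquilinear_axis)
  have "T a b + T b a = 0"
    using assms[of "axis a 1 + axis b 1", unfolded sesquilinear_axis_add] by (simp add: diag)
  moreover have "T a b - T b a = 0"
    using assms[of "axis a 1 + axis b \<i>", unfolded sesquilinear_axis_add] by (simp add: diag)
  ultimately have "(T a b + T b a) + (T a b - T b a) = 0"
    by simp
  then show ?thesis
    by simp
qed

section \<open>The metric in a holomorphic chart\<close>

locale hermitian_chart =
  fixes U :: "(complex^'n::finite) set" and h :: "complex^'n \<Rightarrow> complex^'n^'n"
  assumes open_U: "open U" and hermitian_metric: "hermitian_metric_on U h"
begin

abbreviation hinv :: "complex^'n \<Rightarrow> complex^'n^'n" where
  "hinv w \<equiv> matrix_inv (h w)"

abbreviation dh :: "('n + 'n) \<Rightarrow> 'n \<Rightarrow> 'n \<Rightarrow> complex^'n \<Rightarrow> complex" where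
  "dh A a b w \<equiv> wirt A (\<lambda>w. h w $ a $ b) w"

lemma smooth_metric_entry: "smooth_on U (\<lambda>w. h w $ i $ j)"
  using hermitian_metric unfolding hermitian_metric_on_def by blast

lemma metric_hermitian: "w \<in> U \<Longrightarrow> h w $ j $ i = cnj (h w $ i $ j)"
  using hermitian_metric unfolding hermitian_metric_on_def by blast

lemma metric_pos_def:
  "w \<in> U \<Longrightarrow> v \<noteq> 0 \<Longrightarrow> Re (\<Sum>i\<in>UNIV. \<Sum>j\<in>UNIV. v $ i * h w $ i $ j * cnj (v $ j)) > 0"
  using hermitian_metric unfolding hermitian_metric_on_def by blast

lemma det_metric_nonzero:
  assumes w: "w \<in> U"
  shows "det (h w) \<noteq> 0"
proof -
  have "y = 0" if "h w *v y = 0" for y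
  proof (rule ccontr)
    assume "y \<noteq> 0"
    let ?v = "\<chi> i. cnj (y $ i)"
    have "?v \<noteq> 0"
      using \<open>y \<noteq> 0\<close> by (metis complex_cnj_zero_iff vec_eq_iff vec_lambda_beta zero_index)
    then have pos: "Re (\<Sum>i\<in>UNIV. \<Sum>j\<in>UNIV. ?v $ i * h w $ i $ j * cnj (?v $ j)) > 0"
      using metric_pos_def w by blast
    have "(\<Sum>i\<in>UNIV. \<Sum>j\<in>UNIV. ?v $ i * h w $ i $ j * cnj (?v $ j))
        = (\<Sum>i\<in>UNIV. ?v $ i * (h w *v y) $ i)"
      by (simp add: matrix_vector_mult_def sum_distrib_left mult.assoc)
    also have "\<dots> = 0"
      using that by simp
    finally show False
      using pos by (simp only: zero_complex.sel less_irrefl)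
  qed
  then have "inj ((*v) (h w))"
    by (intro injI) (metis matrix_vector_mult_diff_distrib right_minus_eq)
  then show ?thesis
    using det_nz_iff_inj_gen[OF matrix_vector_mul_linear_gen, of "h w"] by simp
qed

lemma hinv_metric:
  assumes "w \<in> U"
  shows "(\<Sum>k\<in>UNIV. hinv w $ q $ k * h w $ k $ m) = (if q = m then 1 else 0)"
proof -
  have "(hinv w ** h w) $ q $ m = mat 1 $ q $ m"
    using matrix_inv_det_nz(2)[OF det_metric_nonzero[OF assms]] by simp
  then show ?thesis
    by (simp add: matrix_matrix_mult_def mat_def)
qed

lemma metric_hinv:
  assumes "w \<in> U"
  shows "(\<Sum>k\<in>UNIV. h w $ q $ k * hinv w $ k $ m) = (if q = m then 1 else 0)"
proof -
  have "(h w ** hinv w) $ q $ m = mat 1 $ q $ m"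
    using matrix_inv_det_nz(1)[OF det_metric_nonzero[OF assms]] by simp
  then show ?thesis
    by (simp add: matrix_matrix_mult_def mat_def)
qed

lemma lower_index:
  assumes w: "w \<in> U"
  shows "(\<Sum>k\<in>UNIV. (\<Sum>q\<in>UNIV. a q * hinv w $ q $ k) * h w $ k $ m) = a m"
proof -
  have "(\<Sum>k\<in>UNIV. (\<Sum>q\<in>UNIV. a q * hinv w $ q $ k) * h w $ k $ m)
      = (\<Sum>k\<in>UNIV. \<Sum>q\<in>UNIV. a q * (hinv w $ q $ k * h w $ k $ m))"
    by (simp add: sum_distrib_right mult.assoc)
  also have "\<dots> = (\<Sum>q\<in>UNIV. a q * (\<Sum>k\<in>UNIV. hinv w $ q $ k * h w $ k $ m))"
    by (subst sum.swap) (simp add: sum_distrib_left)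
  also have "\<dots> = a m"
    by (simp only: hinv_metric[OF w] sum_mult_delta)
  finally show ?thesis .
qed

definition bigG_inv :: "complex^'n \<Rightarrow> complex^('n + 'n)^('n + 'n)" where
  "bigG_inv w = (\<chi> A B. case (A, B) of
       (Inl k, Inr q) \<Rightarrow> hinv w $ q $ k
     | (Inr q, Inl k) \<Rightarrow> hinv w $ q $ k
     | _ \<Rightarrow> 0)"

lemma matrix_inv_bigG:
  assumes w: "w \<in> U"
  shows "matrix_inv (bigG h w) = bigG_inv w"
proof (rule matrix_inv_unique)
  have hinv_metric': "(\<Sum>k\<in>UNIV. h w $ k $ m * hinv w $ q $ k) = (if m = q then 1 else 0)" for q m
    using hinv_metric[OF w, of q m] by (auto simp: mult.commute)
  have metric_hinv': "(\<Sum>k\<in>UNIV. hinv w $ k $ m * h w $ q $ k) = (if m = q then 1 else 0)" for q m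
    using metric_hinv[OF w, of q m] by (auto simp: mult.commute)
  have "(bigG h w ** bigG_inv w) $ A $ C = mat 1 $ A $ C" for A C
    by (cases A; cases C) (simp_all add: matrix_matrix_mult_def mat_def sum_UNIV_Plus bigG_def
        bigG_inv_def metric_hinv[OF w] hinv_metric')
  then show "bigG h w ** bigG_inv w = mat 1"
    by (simp add: vec_eq_iff)
  have "(bigG_inv w ** bigG h w) $ A $ C = mat 1 $ A $ C" for A C
    by (cases A; cases C) (simp_all add: matrix_matrix_mult_def mat_def sum_UNIV_Plus bigG_def
        bigG_inv_def hinv_metric[OF w] metric_hinv')
  then show "bigG_inv w ** bigG h w = mat 1"
    by (simp add: vec_eq_iff)
qed

lemma lich_christ_Inl:
  assumes w: "w \<in> U"
  shows "lich_christ h k (Inl i) l w = (\<Sum>q\<in>UNIV. (dh (Inl i) l q w + dh (Inl l) i q w) / 2 * hinv w $ q $ k)"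
  unfolding lich_christ_def LC_christ_def matrix_inv_bigG[OF w]
  by (simp add: sum_UNIV_Plus bigG_inv_def bigG_def wirt_const sum_distrib_left mult_ac)

lemma lich_christ_Inr:
  assumes w: "w \<in> U"
  shows "lich_christ h k (Inr j) l w = (\<Sum>q\<in>UNIV. (dh (Inr j) l q w - dh (Inr q) l j w) / 2 * hinv w $ q $ k)"
  unfolding lich_christ_def LC_christ_def matrix_inv_bigG[OF w]
  by (simp add: sum_UNIV_Plus bigG_inv_def bigG_def wirt_const sum_distrib_left mult_ac)

lemma chern_christ_Inl: "chern_christ h k (Inl i) l w = (\<Sum>q\<in>UNIV. dh (Inl i) l q w * hinv w $ q $ k)"
  by (simp add: chern_christ_def)

lemma chern_christ_Inr: "chern_christ h k (Inr j) l w = 0"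
  by (simp add: chern_christ_def)

lemma differentiable_metric_entry: "z \<in> U \<Longrightarrow> (\<lambda>w. h w $ i $ j) differentiable (at z)"
  using smooth_on_differentiable smooth_metric_entry by blast

lemma differentiable_dh: "z \<in> U \<Longrightarrow> (\<lambda>w. dh A i j w) differentiable (at z)"
  using smooth_on_differentiable_wirt smooth_metric_entry by blast

lemma differentiable_hinv_entry:
  assumes z: "z \<in> U"
  shows "(\<lambda>w. hinv w $ q $ k) differentiable (at z)"
proof -
  let ?M = "\<lambda>w. (\<chi> i j. if j = q then axis k 1 $ i else h w $ i $ j) :: complex^'n^'n"
  have "(\<lambda>w. det (?M w)) differentiable (at z)"
    by (rule differentiable_det, case_tac "j = q") (simp_all add: differentiable_metric_entry[OF z])
  moreover have "(\<lambda>w. det (h w)) differentiable (at z)"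
    by (rule differentiable_det) (rule differentiable_metric_entry[OF z])
  ultimately have "(\<lambda>w. det (?M w) / det (h w)) differentiable (at z)"
    using det_metric_nonzero[OF z] by (intro differentiable_divide)
  then show ?thesis
    by (rule differentiable_transform_within_open[OF _ open_U z])
      (simp add: matrix_inv_cramer[OF det_metric_nonzero])
qed

lemma differentiable_chern_christ: "z \<in> U \<Longrightarrow> (\<lambda>w. chern_christ h k A l w) differentiable (at z)"
  by (cases A) (auto simp: chern_christ_Inl chern_christ_Inr
      intro!: differentiable_sum differentiable_mult differentiable_dh differentiable_hinv_entry)

lemma differentiable_lich_christ:
  assumes z: "z \<in> U"
  shows "(\<lambda>w. lich_christ h k A l w) differentiable (at z)"
proof (cases A)
  case (Inl i)
  have "(\<lambda>w. \<Sum>q\<in>UNIV. (dh (Inl i) l q w + dh (Inl l) i q w) / 2 * hinv w $ q $ k) differentiable (at z)"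
    by (intro differentiable_sum ballI differentiable_mult differentiable_divide differentiable_add
        differentiable_const differentiable_dh[OF z] differentiable_hinv_entry[OF z]) auto
  then show ?thesis
    unfolding Inl by (rule differentiable_transform_within_open[OF _ open_U z]) (simp add: lich_christ_Inl)
next
  case (Inr j)
  have "(\<lambda>w. \<Sum>q\<in>UNIV. (dh (Inr j) l q w - dh (Inr q) l j w) / 2 * hinv w $ q $ k) differentiable (at z)"
    by (intro differentiable_sum ballI differentiable_mult differentiable_divide differentiable_diff
        differentiable_const differentiable_dh[OF z] differentiable_hinv_entry[OF z]) auto
  then show ?thesis
    unfolding Inr by (rule differentiable_transform_within_open[OF _ open_U z]) (simp add: lich_christ_Inr)
qed

section \<open>Torsion and the difference tensor\<close>

(* torsion w i p m is T_{i p mbar}: the Chern torsion T_{ip}^k with its upper index lowered. *)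
definition torsion :: "complex^'n \<Rightarrow> 'n \<Rightarrow> 'n \<Rightarrow> 'n \<Rightarrow> complex" where
  "torsion w i p m = dh (Inl i) p m w - dh (Inl p) i m w"

definition torsion_bar :: "complex^'n \<Rightarrow> 'n \<Rightarrow> 'n \<Rightarrow> 'n \<Rightarrow> complex" where
  "torsion_bar w j l q = dh (Inr j) l q w - dh (Inr q) l j w"

lemma torsion_antisym: "torsion w p i m = - torsion w i p m"
  by (simp add: torsion_def)

lemma torsion_bar_antisym: "torsion_bar w q l j = - torsion_bar w j l q"
  by (simp add: torsion_bar_def)

lemma dh_Inr_eq_cnj:
  assumes z: "z \<in> U"
  shows "dh (Inr j) l q z = cnj (dh (Inl j) q l z)"
proof -
  have "dh (Inr j) l q z = wirt (Inr j) (\<lambda>w. cnj (h w $ q $ l)) z"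
    by (rule wirt_cong_open[OF open_U z]) (rule metric_hermitian)
  also have "\<dots> = cnj (dh (Inl j) q l z)"
    by (rule wirt_cnj) (rule differentiable_metric_entry[OF z])
  finally show ?thesis .
qed

lemma torsion_bar_eq_cnj: "z \<in> U \<Longrightarrow> torsion_bar z j l q = cnj (torsion z j q l)"
  by (simp add: torsion_bar_def torsion_def dh_Inr_eq_cnj)

lemma differentiable_torsion_bar: "z \<in> U \<Longrightarrow> (\<lambda>w. torsion_bar w j l q) differentiable (at z)"
  unfolding torsion_bar_def by (intro differentiable_diff differentiable_dh)

lemma lower_chern_christ_Inl:
  "z \<in> U \<Longrightarrow> (\<Sum>k\<in>UNIV. chern_christ h k (Inl i) p z * h z $ k $ m) = dh (Inl i) p m z"
  by (simp only: chern_christ_Inl lower_index)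

lemma wirt_lower:
  assumes z: "z \<in> U" and X: "\<And>k. X k differentiable (at z)"
    and Y: "\<And>w. w \<in> U \<Longrightarrow> (\<Sum>k\<in>UNIV. X k w * h w $ k $ m) = Y w"
  shows "(\<Sum>k\<in>UNIV. wirt A (X k) z * h z $ k $ m) = wirt A Y z - (\<Sum>k\<in>UNIV. X k z * dh A k m z)"
proof -
  have "wirt A Y z = wirt A (\<lambda>w. \<Sum>k\<in>UNIV. X k w * h w $ k $ m) z"
    using Y by (intro wirt_cong_open[OF open_U z]) simp
  also have "\<dots> = (\<Sum>k\<in>UNIV. wirt A (\<lambda>w. X k w * h w $ k $ m) z)"
    by (rule wirt_sum) (auto intro: differentiable_mult X differentiable_metric_entry[OF z])
  also have "\<dots> = (\<Sum>k\<in>UNIV. X k z * dh A k m z + wirt A (X k) z * h z $ k $ m)"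
    by (intro sum.cong refl wirt_mult X differentiable_metric_entry[OF z])
  finally show ?thesis
    by (simp add: sum.distrib)
qed

definition christ_diff :: "'n \<Rightarrow> ('n + 'n) \<Rightarrow> 'n \<Rightarrow> complex^'n \<Rightarrow> complex" where
  "christ_diff k A l w = lich_christ h k A l w - chern_christ h k A l w"

lemma christ_diff_Inl:
  assumes w: "w \<in> U"
  shows "christ_diff k (Inl i) l w = (\<Sum>q\<in>UNIV. torsion w l i q / 2 * hinv w $ q $ k)"
  unfolding christ_diff_def lich_christ_Inl[OF w] chern_christ_Inl sum_subtractf[symmetric]
  by (rule sum.cong) (simp_all add: torsion_def field_simps)

lemma christ_diff_Inr:
  assumes w: "w \<in> U"
  shows "christ_diff k (Inr j) l w = (\<Sum>q\<in>UNIV. torsion_bar w j l q / 2 * hinv w $ q $ k)"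
  by (simp add: christ_diff_def lich_christ_Inr[OF w] chern_christ_Inr torsion_bar_def)

lemma christ_diff_Inl_antisym:
  assumes w: "w \<in> U"
  shows "christ_diff k (Inl i) l w = - christ_diff k (Inl l) i w"
  unfolding christ_diff_Inl[OF w] torsion_antisym[of w i l] by (simp add: sum_negf)

lemma differentiable_christ_diff: "z \<in> U \<Longrightarrow> (\<lambda>w. christ_diff k A l w) differentiable (at z)"
  unfolding christ_diff_def by (intro differentiable_diff differentiable_lich_christ differentiable_chern_christ)

lemma wirt_christ_diff_Inl_antisym:
  assumes z: "z \<in> U"
  shows "wirt B (\<lambda>w. christ_diff k (Inl i) l w) z = - wirt B (\<lambda>w. christ_diff k (Inl l) i w) z"
proof -
  have "wirt B (\<lambda>w. christ_diff k (Inl i) l w) z = wirt B (\<lambda>w. (-1) * christ_diff k (Inl l) i w) z"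
    by (rule wirt_cong_open[OF open_U z]) (simp add: christ_diff_Inl_antisym[of _ k i l])
  also have "\<dots> = (-1) * wirt B (\<lambda>w. christ_diff k (Inl l) i w) z"
    by (rule wirt_cmult) (rule differentiable_christ_diff[OF z])
  finally show ?thesis
    by simp
qed

lemma lower_christ_diff_Inl:
  "z \<in> U \<Longrightarrow> (\<Sum>k\<in>UNIV. christ_diff k (Inl i) p z * h z $ k $ m) = torsion z p i m / 2"
  by (simp only: christ_diff_Inl lower_index)

lemma lower_christ_diff_Inr:
  "z \<in> U \<Longrightarrow> (\<Sum>k\<in>UNIV. christ_diff k (Inr j) p z * h z $ k $ m) = torsion_bar z j p m / 2"
  by (simp only: christ_diff_Inr lower_index)

section \<open>Expansion of the curvature in powers of 1 - t\<close>

lemma gaud_christ_eq: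
  "gaud_christ t h k A l w = chern_christ h k A l w + complex_of_real (1 - t) * christ_diff k A l w"
  by (simp add: gaud_christ_def christ_diff_def algebra_simps)

definition chern_curv :: "'n \<Rightarrow> ('n + 'n) \<Rightarrow> ('n + 'n) \<Rightarrow> 'n \<Rightarrow> complex^'n \<Rightarrow> complex" where
  "chern_curv k A B l z =
     wirt A (\<lambda>w. chern_christ h k B l w) z - wirt B (\<lambda>w. chern_christ h k A l w) z
     + (\<Sum>m\<in>UNIV. chern_christ h m B l z * chern_christ h k A m z - chern_christ h m A l z * chern_christ h k B m z)"

definition curv_lin :: "'n \<Rightarrow> ('n + 'n) \<Rightarrow> ('n + 'n) \<Rightarrow> 'n \<Rightarrow> complex^'n \<Rightarrow> complex" where
  "curv_lin k A B l z =
     wirt A (\<lambda>w. christ_diff k B l w) z - wirt B (\<lambda>w. christ_diff k A l w) z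
     + (\<Sum>m\<in>UNIV. chern_christ h m B l z * christ_diff k A m z + christ_diff m B l z * chern_christ h k A m z
                - chern_christ h m A l z * christ_diff k B m z - christ_diff m A l z * chern_christ h k B m z)"

definition curv_quad :: "'n \<Rightarrow> ('n + 'n) \<Rightarrow> ('n + 'n) \<Rightarrow> 'n \<Rightarrow> complex^'n \<Rightarrow> complex" where
  "curv_quad k A B l z =
     (\<Sum>m\<in>UNIV. christ_diff m B l z * christ_diff k A m z - christ_diff m A l z * christ_diff k B m z)"

lemma gaud_curv_expand:
  assumes z: "z \<in> U"
  shows "gaud_curv t h k A B l z = chern_curv k A B l z + complex_of_real (1 - t) * curv_lin k A B l z
           + (complex_of_real (1 - t))^2 * curv_quad k A B l z"
proof -
  define u where "u = complex_of_real (1 - t)"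
  let ?c = "\<lambda>k A l. chern_christ h k A l z" and ?e = "\<lambda>k A l. christ_diff k A l z"
  have wirt_gaud_christ: "wirt X (gaud_christ t h k' Y l') z
      = wirt X (\<lambda>w. chern_christ h k' Y l' w) z + u * wirt X (\<lambda>w. christ_diff k' Y l' w) z" for X Y k' l'
  proof -
    have "wirt X (gaud_christ t h k' Y l') z
        = wirt X (\<lambda>w. chern_christ h k' Y l' w) z + wirt X (\<lambda>w. u * christ_diff k' Y l' w) z"
      unfolding gaud_christ_eq[abs_def] u_def[symmetric]
      by (rule wirt_add) (auto intro!: differentiable_chern_christ[OF z] differentiable_mult
          differentiable_christ_diff[OF z])
    then show ?thesis
      by (simp add: wirt_cmult differentiable_christ_diff[OF z])
  qed
  have "(\<Sum>m\<in>UNIV. (?c m B l + u * ?e m B l) * (?c k A m + u * ?e k A m)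
                 - (?c m A l + u * ?e m A l) * (?c k B m + u * ?e k B m))
      = (\<Sum>m\<in>UNIV. (?c m B l * ?c k A m - ?c m A l * ?c k B m)
          + u * (?c m B l * ?e k A m + ?e m B l * ?c k A m - ?c m A l * ?e k B m - ?e m A l * ?c k B m)
          + u^2 * (?e m B l * ?e k A m - ?e m A l * ?e k B m))"
    by (rule sum.cong[OF refl]) (simp add: algebra_simps power2_eq_square)
  also have "\<dots> = (\<Sum>m\<in>UNIV. ?c m B l * ?c k A m - ?c m A l * ?c k B m)
      + u * (\<Sum>m\<in>UNIV. ?c m B l * ?e k A m + ?e m B l * ?c k A m - ?c m A l * ?e k B m - ?e m A l * ?c k B m)
      + u^2 * (\<Sum>m\<in>UNIV. ?e m B l * ?e k A m - ?e m A l * ?e k B m)"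
    by (simp only: sum.distrib sum_distrib_left)
  finally have products: "(\<Sum>m\<in>UNIV. (?c m B l + u * ?e m B l) * (?c k A m + u * ?e k A m)
                 - (?c m A l + u * ?e m A l) * (?c k B m + u * ?e k B m)) = \<dots>" .
  show ?thesis
    unfolding gaud_curv_def wirt_gaud_christ chern_curv_def curv_lin_def curv_quad_def
      gaud_christ_eq u_def[symmetric] products
    by (simp add: algebra_simps)
qed

section \<open>Evaluation on a holomorphic direction\<close>

(* g(F(v, vbar) v, vbar) for a tensor with components F k i j l = F^k_{i jbar l}. *)
definition curv_form :: "complex^'n \<Rightarrow> complex^'n \<Rightarrow> ('n \<Rightarrow> 'n \<Rightarrow> 'n \<Rightarrow> 'n \<Rightarrow> complex) \<Rightarrow> complex" where
  "curv_form z v F = (\<Sum>i\<in>UNIV. \<Sum>j\<in>UNIV. \<Sum>l\<in>UNIV. \<Sum>m\<in>UNIV.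
     v $ i * cnj (v $ j) * v $ l * cnj (v $ m) * (\<Sum>k\<in>UNIV. F k i j l * h z $ k $ m))"

lemma gaud_HSC_eq_curv_form:
  "gaud_HSC t h z v = curv_form z v (\<lambda>k i j l. gaud_curv t h k (Inl i) (Inr j) l z)
     / (\<Sum>i\<in>UNIV. \<Sum>j\<in>UNIV. v $ i * cnj (v $ j) * h z $ i $ j) ^ 2"
proof -
  let ?f = "\<lambda>k m i j l. v $ i * cnj (v $ j) * v $ l * cnj (v $ m) * (gaud_curv t h k (Inl i) (Inr j) l z * h z $ k $ m)"
  have "(\<Sum>k\<in>UNIV. \<Sum>m\<in>UNIV. (\<Sum>i\<in>UNIV. \<Sum>j\<in>UNIV. \<Sum>l\<in>UNIV.
            v $ i * cnj (v $ j) * v $ l * gaud_curv t h k (Inl i) (Inr j) l z) * cnj (v $ m) * h z $ k $ m)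
      = (\<Sum>k\<in>UNIV. \<Sum>m\<in>UNIV. \<Sum>i\<in>UNIV. \<Sum>j\<in>UNIV. \<Sum>l\<in>UNIV. ?f k m i j l)"
    by (simp only: sum_distrib_right) (simp add: mult_ac)
  also have "\<dots> = (\<Sum>k\<in>UNIV. \<Sum>i\<in>UNIV. \<Sum>j\<in>UNIV. \<Sum>l\<in>UNIV. \<Sum>m\<in>UNIV. ?f k m i j l)"
    by (rule sum.cong[OF refl], rule sum_swap_in3)
  also have "\<dots> = (\<Sum>i\<in>UNIV. \<Sum>j\<in>UNIV. \<Sum>l\<in>UNIV. \<Sum>k\<in>UNIV. \<Sum>m\<in>UNIV. ?f k m i j l)"
    by (rule sum_swap_in3)
  also have "\<dots> = (\<Sum>i\<in>UNIV. \<Sum>j\<in>UNIV. \<Sum>l\<in>UNIV. \<Sum>m\<in>UNIV. \<Sum>k\<in>UNIV. ?f k m i j l)"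
    by (rule sum.cong[OF refl], rule sum.cong[OF refl], rule sum.cong[OF refl], rule sum.swap)
  also have "\<dots> = curv_form z v (\<lambda>k i j l. gaud_curv t h k (Inl i) (Inr j) l z)"
    by (simp only: curv_form_def sum_distrib_left)
  finally show ?thesis
    by (simp add: gaud_HSC_def)
qed

lemma curv_form_add: "curv_form z v (\<lambda>k i j l. F k i j l + G k i j l) = curv_form z v F + curv_form z v G"
  by (simp add: curv_form_def distrib_left distrib_right sum.distrib)

lemma curv_form_diff: "curv_form z v (\<lambda>k i j l. F k i j l - G k i j l) = curv_form z v F - curv_form z v G"
  by (simp add: curv_form_def right_diff_distrib left_diff_distrib sum_subtractf)

lemma curv_form_cmult: "curv_form z v (\<lambda>k i j l. c * F k i j l) = c * curv_form z v F"
  by (simp add: curv_form_def sum_distrib_left mult_ac)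

lemma curv_form_antisym_il:
  assumes "\<And>k i j l. X k i j l = - X k l j i"
  shows "curv_form z v X = 0"
  unfolding curv_form_def
proof (rule sum_antisym_eq_0)
  fix i j l
  show "(\<Sum>m\<in>UNIV. v $ i * cnj (v $ j) * v $ l * cnj (v $ m) * (\<Sum>k\<in>UNIV. X k i j l * h z $ k $ m))
      = - (\<Sum>m\<in>UNIV. v $ l * cnj (v $ j) * v $ i * cnj (v $ m) * (\<Sum>k\<in>UNIV. X k l j i * h z $ k $ m))"
    by (simp add: assms[of _ i j l] sum_negf mult_ac)
qed

lemma curv_form_antisym_jm:
  assumes "\<And>i j l m. (\<Sum>k\<in>UNIV. X k i j l * h z $ k $ m) = - (\<Sum>k\<in>UNIV. X k i m l * h z $ k $ j)"
  shows "curv_form z v X = 0"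
  unfolding curv_form_def
proof (rule sum.neutral, rule ballI, rule sum_antisym_eq_0)
  fix i j l m
  show "v $ i * cnj (v $ j) * v $ l * cnj (v $ m) * (\<Sum>k\<in>UNIV. X k i j l * h z $ k $ m)
      = - (v $ i * cnj (v $ m) * v $ l * cnj (v $ j) * (\<Sum>k\<in>UNIV. X k i m l * h z $ k $ j))"
    using assms[of i j l m] by (simp add: mult_ac)
qed

(* The Chern covariant derivative (nabla_i E)^k_{jbar l}. The Chern connection has no
   mixed-type Christoffel symbols, so there is no correction term for the index jbar. *)
definition chern_deriv_christ_diff :: "complex^'n \<Rightarrow> 'n \<Rightarrow> 'n \<Rightarrow> 'n \<Rightarrow> 'n \<Rightarrow> complex" where
  "chern_deriv_christ_diff z k i j l = wirt (Inl i) (\<lambda>w. christ_diff k (Inr j) l w) z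
     + (\<Sum>m\<in>UNIV. christ_diff m (Inr j) l z * chern_christ h k (Inl i) m z)
     - (\<Sum>m\<in>UNIV. chern_christ h m (Inl i) l z * christ_diff k (Inr j) m z)"

lemma curv_lin_Inl_Inr:
  "curv_lin k (Inl i) (Inr j) l z
     = chern_deriv_christ_diff z k i j l - wirt (Inr j) (\<lambda>w. christ_diff k (Inl i) l w) z"
  by (simp add: curv_lin_def chern_deriv_christ_diff_def chern_christ_Inr sum_subtractf algebra_simps)

lemma wirt_torsion_bar_antisym:
  assumes z: "z \<in> U"
  shows "wirt A (\<lambda>w. torsion_bar w m l j) z = - wirt A (\<lambda>w. torsion_bar w j l m) z"
proof -
  have "wirt A (\<lambda>w. torsion_bar w m l j) z = wirt A (\<lambda>w. (-1) * torsion_bar w j l m) z"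
    by (simp add: torsion_bar_antisym[of _ m l j])
  also have "\<dots> = (-1) * wirt A (\<lambda>w. torsion_bar w j l m) z"
    by (rule wirt_cmult) (rule differentiable_torsion_bar[OF z])
  finally show ?thesis
    by simp
qed

lemma lower_chern_deriv_christ_diff:
  assumes z: "z \<in> U"
  shows "(\<Sum>k\<in>UNIV. chern_deriv_christ_diff z k i j l * h z $ k $ m)
    = (wirt (Inl i) (\<lambda>w. torsion_bar w j l m) z
       - (\<Sum>p\<in>UNIV. chern_christ h p (Inl i) l z * torsion_bar z j p m)) / 2"
proof -
  have "(\<Sum>k\<in>UNIV. wirt (Inl i) (\<lambda>w. christ_diff k (Inr j) l w) z * h z $ k $ m)
      = wirt (Inl i) (\<lambda>w. (1/2) * torsion_bar w j l m) z - (\<Sum>p\<in>UNIV. christ_diff p (Inr j) l z * dh (Inl i) p m z)"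
    by (rule wirt_lower[OF z]) (simp_all add: differentiable_christ_diff[OF z] lower_christ_diff_Inr)
  also have "wirt (Inl i) (\<lambda>w. (1/2) * torsion_bar w j l m) z = (1/2) * wirt (Inl i) (\<lambda>w. torsion_bar w j l m) z"
    by (rule wirt_cmult) (rule differentiable_torsion_bar[OF z])
  finally have derivative_term: "(\<Sum>k\<in>UNIV. wirt (Inl i) (\<lambda>w. christ_diff k (Inr j) l w) z * h z $ k $ m)
      = (1/2) * wirt (Inl i) (\<lambda>w. torsion_bar w j l m) z - (\<Sum>p\<in>UNIV. christ_diff p (Inr j) l z * dh (Inl i) p m z)" .
  \<comment> \<open>This cancels the derivative of h left over in the derivative term.\<close>
  have "(\<Sum>k\<in>UNIV. (\<Sum>p\<in>UNIV. christ_diff p (Inr j) l z * chern_christ h k (Inl i) p z) * h z $ k $ m)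
      = (\<Sum>p\<in>UNIV. christ_diff p (Inr j) l z * dh (Inl i) p m z)"
    by (simp only: sum_mult_sum_swap lower_chern_christ_Inl[OF z])
  moreover have "(\<Sum>k\<in>UNIV. (\<Sum>p\<in>UNIV. chern_christ h p (Inl i) l z * christ_diff k (Inr j) p z) * h z $ k $ m)
      = (\<Sum>p\<in>UNIV. chern_christ h p (Inl i) l z * (torsion_bar z j p m / 2))"
    by (simp only: sum_mult_sum_swap lower_christ_diff_Inr[OF z])
  ultimately have "(\<Sum>k\<in>UNIV. chern_deriv_christ_diff z k i j l * h z $ k $ m)
    = (1/2) * wirt (Inl i) (\<lambda>w. torsion_bar w j l m) z
      - (\<Sum>p\<in>UNIV. chern_christ h p (Inl i) l z * (torsion_bar z j p m / 2))"
    by (simp only: chern_deriv_christ_diff_def distrib_right left_diff_distrib sum.distrib sum_subtractf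
        derivative_term diff_add_cancel)
  then show ?thesis
    by (simp add: sum_divide_distrib[symmetric] field_simps)
qed

lemma curv_form_curv_lin:
  assumes z: "z \<in> U"
  shows "curv_form z v (\<lambda>k i j l. curv_lin k (Inl i) (Inr j) l z) = 0"
proof -
  have "curv_form z v (chern_deriv_christ_diff z) = 0"
  proof (rule curv_form_antisym_jm)
    fix i j l m
    show "(\<Sum>k\<in>UNIV. chern_deriv_christ_diff z k i j l * h z $ k $ m)
        = - (\<Sum>k\<in>UNIV. chern_deriv_christ_diff z k i m l * h z $ k $ j)"
      unfolding lower_chern_deriv_christ_diff[OF z] wirt_torsion_bar_antisym[OF z, of _ m l j]
      by (simp add: torsion_bar_antisym[of z m _ j] sum_negf field_simps)
  qed
  moreover have "curv_form z v (\<lambda>k i j l. wirt (Inr j) (\<lambda>w. christ_diff k (Inl i) l w) z) = 0"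
    by (rule curv_form_antisym_il) (rule wirt_christ_diff_Inl_antisym[OF z])
  ultimately show ?thesis
    by (simp add: curv_lin_Inl_Inr curv_form_diff)
qed

definition torsion_contr :: "complex^'n \<Rightarrow> complex^'n \<Rightarrow> 'n \<Rightarrow> complex" where
  "torsion_contr z v p = (\<Sum>i\<in>UNIV. \<Sum>m\<in>UNIV. v $ i * cnj (v $ m) * torsion z i p m)"

lemma torsion_contr_swap:
  "(\<Sum>i\<in>UNIV. \<Sum>m\<in>UNIV. v $ i * cnj (v $ m) * torsion z p i m) = - torsion_contr z v p"
  by (simp add: torsion_contr_def torsion_antisym[of z p] sum_negf)

lemma christ_diff_Inr_contr:
  assumes z: "z \<in> U"
  shows "(\<Sum>j\<in>UNIV. \<Sum>l\<in>UNIV. cnj (v $ j) * v $ l * christ_diff p (Inr j) l z)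
       = (\<Sum>q\<in>UNIV. cnj (torsion_contr z v q) / 2 * hinv z $ q $ p)"
proof -
  have "(\<Sum>j\<in>UNIV. \<Sum>l\<in>UNIV. cnj (v $ j) * v $ l * christ_diff p (Inr j) l z)
      = (\<Sum>j\<in>UNIV. \<Sum>l\<in>UNIV. \<Sum>q\<in>UNIV. cnj (v $ j) * v $ l * torsion_bar z j l q / 2 * hinv z $ q $ p)"
    by (simp add: christ_diff_Inr[OF z] sum_distrib_left mult_ac)
  also have "\<dots> = (\<Sum>q\<in>UNIV. (\<Sum>j\<in>UNIV. \<Sum>l\<in>UNIV. cnj (v $ j) * v $ l * torsion_bar z j l q) / 2 * hinv z $ q $ p)"
    by (subst sum_swap_in2[symmetric]) (simp add: sum_distrib_right sum_divide_distrib)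
  also have "\<dots> = (\<Sum>q\<in>UNIV. cnj (torsion_contr z v q) / 2 * hinv z $ q $ p)"
    by (simp add: torsion_contr_def torsion_bar_eq_cnj[OF z] mult_ac)
  finally show ?thesis .
qed

lemma curv_form_curv_quad:
  assumes z: "z \<in> U"
  shows "curv_form z v (\<lambda>k i j l. curv_quad k (Inl i) (Inr j) l z)
     = - (\<Sum>p\<in>UNIV. \<Sum>q\<in>UNIV. hinv z $ q $ p * cnj (torsion_contr z v q) * torsion_contr z v p) / 4"
proof -
  let ?Q = "\<lambda>k i j l. \<Sum>p\<in>UNIV. christ_diff p (Inr j) l z * christ_diff k (Inl i) p z"
  let ?R = "\<lambda>k i j l. \<Sum>p\<in>UNIV. christ_diff p (Inl i) l z * christ_diff k (Inr j) p z"
  have "curv_form z v (\<lambda>k i j l. curv_quad k (Inl i) (Inr j) l z) = curv_form z v (\<lambda>k i j l. ?Q k i j l - ?R k i j l)"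
    by (simp add: curv_quad_def sum_subtractf)
  also have "\<dots> = curv_form z v ?Q - curv_form z v ?R"
    by (rule curv_form_diff)
  also have "curv_form z v ?R = 0"
  proof (rule curv_form_antisym_il)
    fix k i j l
    show "?R k i j l = - ?R k l j i"
      by (simp add: christ_diff_Inl_antisym[OF z, of _ i l] sum_negf)
  qed
  also have "curv_form z v ?Q = (\<Sum>i\<in>UNIV. \<Sum>j\<in>UNIV. \<Sum>l\<in>UNIV. \<Sum>m\<in>UNIV. \<Sum>p\<in>UNIV.
      (cnj (v $ j) * v $ l * christ_diff p (Inr j) l z) * (v $ i * cnj (v $ m) * torsion z p i m / 2))"
    unfolding curv_form_def sum_mult_sum_swap lower_christ_diff_Inl[OF z]
    by (simp add: sum_distrib_left mult_ac)
  also have "\<dots> = (\<Sum>p\<in>UNIV. (\<Sum>j\<in>UNIV. \<Sum>l\<in>UNIV. cnj (v $ j) * v $ l * christ_diff p (Inr j) l z)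
      * (\<Sum>i\<in>UNIV. \<Sum>m\<in>UNIV. v $ i * cnj (v $ m) * torsion z p i m / 2))"
    by (rule sum4_mult_factor)
  also have "\<dots> = (\<Sum>p\<in>UNIV. (\<Sum>q\<in>UNIV. cnj (torsion_contr z v q) / 2 * hinv z $ q $ p) * (- torsion_contr z v p / 2))"
    by (simp add: christ_diff_Inr_contr[OF z] torsion_contr_swap flip: sum_divide_distrib)
  also have "\<dots> = - (\<Sum>p\<in>UNIV. \<Sum>q\<in>UNIV. hinv z $ q $ p * cnj (torsion_contr z v q) * torsion_contr z v p) / 4"
    by (simp add: sum_distrib_left sum_distrib_right sum_negf sum_divide_distrib mult_ac)
  finally show ?thesis
    by simp
qed

lemma hinv_form_eq_0_imp:
  assumes z: "z \<in> U" and form: "(\<Sum>p\<in>UNIV. \<Sum>q\<in>UNIV. hinv z $ q $ p * cnj (w q) * w p) = 0"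
  shows "w p = 0"
proof -
  \<comment> \<open>w is the lowering of the conjugate of y, so the form is the h-norm of y.\<close>
  define y where "y = (\<chi> p. \<Sum>q\<in>UNIV. cnj (w q) * hinv z $ q $ p)"
  have cnj_w: "cnj (w q) = (\<Sum>i\<in>UNIV. y $ i * h z $ i $ q)" for q
    unfolding y_def vec_lambda_beta by (simp only: lower_index[OF z])
  have w: "w q = (\<Sum>i\<in>UNIV. h z $ q $ i * cnj (y $ i))" for q
    using arg_cong[OF cnj_w[of q], of cnj] by (simp add: metric_hermitian[OF z, of q] mult.commute)
  have "(\<Sum>p\<in>UNIV. \<Sum>q\<in>UNIV. hinv z $ q $ p * cnj (w q) * w p) = (\<Sum>p\<in>UNIV. y $ p * w p)"
    by (simp add: y_def sum_distrib_left mult_ac)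
  also have "\<dots> = (\<Sum>p\<in>UNIV. \<Sum>i\<in>UNIV. y $ p * h z $ p $ i * cnj (y $ i))"
    by (simp add: w sum_distrib_left mult_ac)
  finally have "y = 0"
    using form metric_pos_def[OF z, of y] by force
  then show ?thesis
    using cnj_w[of p] by simp
qed

lemma curv_form_gaud_curv:
  assumes z: "z \<in> U"
  shows "curv_form z v (\<lambda>k i j l. gaud_curv r h k (Inl i) (Inr j) l z)
    = curv_form z v (\<lambda>k i j l. chern_curv k (Inl i) (Inr j) l z)
      + (complex_of_real (1 - r))^2 * curv_form z v (\<lambda>k i j l. curv_quad k (Inl i) (Inr j) l z)"
  by (simp only: gaud_curv_expand[OF z] curv_form_add curv_form_cmult curv_form_curv_lin[OF z])
    simp

lemma torsion_contr_eq_0_if_HSC_eq: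
  assumes z: "z \<in> U" and ts: "(1 - t)^2 \<noteq> (1 - s)^2"
    and HSC: "\<forall>v. v \<noteq> 0 \<longrightarrow> gaud_HSC t h z v = gaud_HSC s h z v"
  shows "torsion_contr z v p = 0"
proof (cases "v = 0")
  case True
  then show ?thesis
    by (simp add: torsion_contr_def)
next
  case False
  define d where "d = (\<Sum>i\<in>UNIV. \<Sum>j\<in>UNIV. v $ i * cnj (v $ j) * h z $ i $ j)"
  have "Re d > 0"
    using metric_pos_def[OF z False] unfolding d_def by (simp add: mult_ac)
  then have "d \<noteq> 0"
    by auto
  define N0 where "N0 = curv_form z v (\<lambda>k i j l. chern_curv k (Inl i) (Inr j) l z)"
  define N2 where "N2 = curv_form z v (\<lambda>k i j l. curv_quad k (Inl i) (Inr j) l z)"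
  have "gaud_HSC t h z v = gaud_HSC s h z v"
    using HSC False by blast
  then have "(N0 + (complex_of_real (1 - t))^2 * N2) / d^2 = (N0 + (complex_of_real (1 - s))^2 * N2) / d^2"
    by (simp only: gaud_HSC_eq_curv_form curv_form_gaud_curv[OF z] N0_def N2_def d_def)
  then have "(complex_of_real (1 - t))^2 * N2 = (complex_of_real (1 - s))^2 * N2"
    using \<open>d \<noteq> 0\<close> by simp
  moreover have "(complex_of_real (1 - t))^2 \<noteq> (complex_of_real (1 - s))^2"
    using ts by (metis of_real_eq_iff of_real_power)
  ultimately have "N2 = 0"
    by simp
  then show ?thesis
    unfolding N2_def curv_form_curv_quad[OF z]
    by (intro hinv_form_eq_0_imp[OF z, where w = "torsion_contr z v"]) simp
qed

lemma kahler_if_torsion_eq_0: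
  assumes "\<And>z i p m. z \<in> U \<Longrightarrow> torsion z i p m = 0"
  shows "kahler_on U h"
  unfolding kahler_on_def
proof (intro ballI allI conjI)
  fix z i j k assume z: "z \<in> U"
  show "dh (Inl k) i j z = dh (Inl i) k j z"
    using assms[OF z, of k i j] by (simp add: torsion_def)
  show "dh (Inr k) i j z = dh (Inr j) i k z"
    using assms[OF z, of k j i] by (simp add: torsion_def dh_Inr_eq_cnj[OF z])
qed

end

theorem theorem1p8:
  fixes U :: "(complex^'n::finite) set"
    and h :: "complex^'n \<Rightarrow> complex^'n^'n"
    and t s :: real
  assumes "open U"
    and "hermitian_metric_on U h"
    and "\<forall>z\<in>U. \<forall>v::complex^'n. v \<noteq> 0 \<longrightarrow> gaud_HSC t h z v = gaud_HSC s h z v"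
  shows "t = s \<or> t = 2 - s \<or> kahler_on U h"
proof -
  interpret hermitian_chart U h
    using assms(1,2) by unfold_locales
  have "kahler_on U h" if "t \<noteq> s" "t \<noteq> 2 - s"
  proof (rule kahler_if_torsion_eq_0)
    fix z i p m assume z: "z \<in> U"
    have "(1 - t)^2 \<noteq> (1 - s)^2"
      using that by (simp add: power2_eq_iff)
    then have "torsion_contr z v p = 0" for v
      by (rule torsion_contr_eq_0_if_HSC_eq[OF z]) (use assms(3) z in blast)
    then show "torsion z i p m = 0"
      using sesquilinear_eq_0_imp_eq_0[of "\<lambda>i m. torsion z i p m"] by (simp add: torsion_contr_def)
  qed
  then show ?thesis
    by blast
qed

end
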